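(* For all $\nu_1,\nu_2\in\mathscr{P}_{\mathbb{T}^2}$, $$m_{1,1}(\nu_1\boxtimes\boxtimes\nu_2)=m_{1,1}(\nu_1)\,m_{1,1}(\nu_2)\quad\text{and}\quad m_{1,-1}(\nu_1\boxtimes\boxtimes^{\mathrm{op}}\nu_2)=m_{1,-1}(\nu_1)\,m_{1,-1}(\nu_2).$$
   Context: For $\nu\in\mathscr{P}_{\mathbb{T}^2}$ (Borel probability measures on $\mathbb{T}^2$) and $(p,q)\in\mathbb{Z}^2$, $m_{p,q}(\nu)=\int_{\mathbb{T}^2}s_1^ps_2^q\,d\nu(s_1,s_2)$. The distribution of a pair $(u,v)$ of commuting unitaries in a $C^*$-probability space $(\mathcal{A},\varphi)$ is the $\nu\in\mathscr{P}_{\mathbb{T}^2}$ with $m_{p,q}(\nu)=\varphi(u^pv^q)$ for all $p,q$. The bi-free multiplicative convolution $\nu_1\boxtimes\boxtimes\nu_2$ is the distribution of $(u_1u_2,v_1v_2)$, where $(u_1,v_1),(u_2,v_2)$ are bi-free (Voiculescu) bipartite pairs of unitaries (each $u_i$ commutes with each $v_j$) with distributions $\nu_1,\nu_2$. $\nu^\star$ denotes the push-forward of $\nu$ under $(s_1,s_2)\mapsto(s_1,1/s_2)$, and $\nu_1\boxtimes\boxtimes^{\mathrm{op}}\nu_2:=(\nu_1^\star\boxtimes\boxtimes\nu_2^\star)^\star$. *)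

theory Defs
  imports "HOL-Probability.Probability"
begin

text \<open>The scalar action of the complex numbers is given by a central unital
ring homomorphism sc from the complex numbers into the ring; adj is the involution.\<close>

definition star_prob_space ::
  "(complex \<Rightarrow> 'a::ring_1) \<Rightarrow> ('a \<Rightarrow> 'a) \<Rightarrow> ('a \<Rightarrow> complex) \<Rightarrow> bool" where
  "star_prob_space sc adj \<phi> \<longleftrightarrow>
     (\<forall>c d. sc (c + d) = sc c + sc d) \<and> (\<forall>c d. sc (c * d) = sc c * sc d) \<and> sc 1 = 1 \<and>
     (\<forall>c a. sc c * a = a * sc c) \<and>
     (\<forall>a b. adj (a + b) = adj a + adj b) \<and> (\<forall>a b. adj (a * b) = adj b * adj a) \<and>
     (\<forall>a. adj (adj a) = a) \<and> (\<forall>c. adj (sc c) = sc (cnj c)) \<and>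
     (\<forall>a b. \<phi> (a + b) = \<phi> a + \<phi> b) \<and> (\<forall>c a. \<phi> (sc c * a) = c * \<phi> a) \<and> \<phi> 1 = 1 \<and>
     (\<forall>a. \<phi> (adj a * a) \<in> \<real> \<and> Re (\<phi> (adj a * a)) \<ge> 0)"

definition unitary_el :: "('a::ring_1 \<Rightarrow> 'a) \<Rightarrow> 'a \<Rightarrow> bool" where
  "unitary_el adj u \<longleftrightarrow> adj u * u = 1 \<and> u * adj u = 1"

definition upow :: "('a::ring_1 \<Rightarrow> 'a) \<Rightarrow> 'a \<Rightarrow> int \<Rightarrow> 'a" where
  "upow adj u p = (if p \<ge> 0 then u ^ nat p else adj u ^ nat (- p))"

inductive_set star_alg :: "(complex \<Rightarrow> 'a::ring_1) \<Rightarrow> ('a \<Rightarrow> 'a) \<Rightarrow> 'a set \<Rightarrow> 'a set"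
  for sc adj G where
  gen: "x \<in> G \<Longrightarrow> x \<in> star_alg sc adj G"
| scal: "sc c \<in> star_alg sc adj G"
| add: "x \<in> star_alg sc adj G \<Longrightarrow> y \<in> star_alg sc adj G \<Longrightarrow> x + y \<in> star_alg sc adj G"
| mult: "x \<in> star_alg sc adj G \<Longrightarrow> y \<in> star_alg sc adj G \<Longrightarrow> x * y \<in> star_alg sc adj G"
| star: "x \<in> star_alg sc adj G \<Longrightarrow> adj x \<in> star_alg sc adj G"

text \<open>A vector space with specified state vector is modelled (up to isomorphism)
as the space of finitely supported functions on a basis S with a distinguished basis
element s: the state vector is the indicator of s and the complement space is spanned
by the remaining basis vectors.\<close>

definition finsupp :: "'b set \<Rightarrow> ('b \<Rightarrow> complex) \<Rightarrow> bool" where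
  "finsupp S x \<longleftrightarrow> finite {t. x t \<noteq> 0} \<and> {t. x t \<noteq> 0} \<subseteq> S"

definition ev :: "'b \<Rightarrow> 'b \<Rightarrow> complex" where
  "ev t = (\<lambda>t'. if t' = t then 1 else 0)"

definition lin_op :: "'b set \<Rightarrow> (('b \<Rightarrow> complex) \<Rightarrow> ('b \<Rightarrow> complex)) \<Rightarrow> bool" where
  "lin_op S T \<longleftrightarrow> (\<forall>x. finsupp S x \<longrightarrow> finsupp S (T x)) \<and>
     (\<forall>x y. finsupp S x \<longrightarrow> finsupp S y \<longrightarrow> T (\<lambda>t. x t + y t) = (\<lambda>t. T x t + T y t)) \<and>
     (\<forall>c x. finsupp S x \<longrightarrow> T (\<lambda>t. c * x t) = (\<lambda>t. c * T x t))"

definition unital_hom ::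
  "'b set \<Rightarrow> (complex \<Rightarrow> 'a::ring_1) \<Rightarrow> 'a set \<Rightarrow> ('a \<Rightarrow> ('b \<Rightarrow> complex) \<Rightarrow> ('b \<Rightarrow> complex)) \<Rightarrow> bool" where
  "unital_hom S sc B l \<longleftrightarrow>
     (\<forall>a\<in>B. lin_op S (l a)) \<and>
     (\<forall>x. finsupp S x \<longrightarrow> l 1 x = x) \<and>
     (\<forall>a\<in>B. \<forall>b\<in>B. \<forall>x. finsupp S x \<longrightarrow>
         l (a * b) x = l a (l b x) \<and> l (a + b) x = (\<lambda>t. l a x t + l b x t)) \<and>
     (\<forall>c. \<forall>a\<in>B. \<forall>x. finsupp S x \<longrightarrow> l (sc c * a) x = (\<lambda>t. c * l a x t))"

text \<open>The free product space has as basis the reduced words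
(i1,t1)...(in,tn) with consecutive indices distinct and each tk a non-distinguished
basis element of the ik-th space; the empty word is the state vector.\<close>

type_synonym ('i, 'b) fvec = "('i \<times> 'b) list \<Rightarrow> complex"

definition expand :: "(('b \<Rightarrow> complex)) \<Rightarrow> ('b \<Rightarrow> ('i \<times> 'b) list) \<Rightarrow> ('i, 'b) fvec" where
  "expand y j = (\<lambda>w''. \<Sum>t'\<in>{t. y t \<noteq> 0}. if w'' = j t' then y t' else 0)"

text \<open>Left regular action lambda_i(T): identifies X with X_i tensor X(l,i).\<close>
definition lam_e :: "('i \<Rightarrow> 'b) \<Rightarrow> 'i \<Rightarrow> (('b \<Rightarrow> complex) \<Rightarrow> ('b \<Rightarrow> complex)) \<Rightarrow> ('i \<times> 'b) list \<Rightarrow> ('i, 'b) fvec" where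
  "lam_e s i T w =
     (case w of
        (j, t) # w' \<Rightarrow>
          (if j = i then expand (T (ev t)) (\<lambda>t'. if t' = s i then w' else (i, t') # w')
           else expand (T (ev (s i))) (\<lambda>t'. if t' = s i then w else (i, t') # w))
      | [] \<Rightarrow> expand (T (ev (s i))) (\<lambda>t'. if t' = s i then w else (i, t') # w))"

definition lam :: "('i \<Rightarrow> 'b) \<Rightarrow> 'i \<Rightarrow> (('b \<Rightarrow> complex) \<Rightarrow> ('b \<Rightarrow> complex)) \<Rightarrow> ('i, 'b) fvec \<Rightarrow> ('i, 'b) fvec" where
  "lam s i T x = (\<lambda>w''. \<Sum>w\<in>{w. x w \<noteq> 0}. x w * lam_e s i T w w'')"

text \<open>Right regular action rho_i(T): identifies X with X(r,i) tensor X_i.\<close>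
definition rho_e :: "('i \<Rightarrow> 'b) \<Rightarrow> 'i \<Rightarrow> (('b \<Rightarrow> complex) \<Rightarrow> ('b \<Rightarrow> complex)) \<Rightarrow> ('i \<times> 'b) list \<Rightarrow> ('i, 'b) fvec" where
  "rho_e s i T w =
     (if w \<noteq> [] \<and> fst (last w) = i
      then expand (T (ev (snd (last w))))
             (\<lambda>t'. if t' = s i then butlast w else butlast w @ [(i, t')])
      else expand (T (ev (s i))) (\<lambda>t'. if t' = s i then w else w @ [(i, t')]))"

definition rho :: "('i \<Rightarrow> 'b) \<Rightarrow> 'i \<Rightarrow> (('b \<Rightarrow> complex) \<Rightarrow> ('b \<Rightarrow> complex)) \<Rightarrow> ('i, 'b) fvec \<Rightarrow> ('i, 'b) fvec" where
  "rho s i T x = (\<lambda>w''. \<Sum>w\<in>{w. x w \<noteq> 0}. x w * rho_e s i T w w'')"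

text \<open>The family of pairs of faces (B i, C i), i in I, is bi-free in (A, phi) if there
are vector spaces with specified state vectors (here with bases in the type 'b) and
unital homomorphisms l i, r i of B i, C i into their linear operators such that the
two-faced family (lambda_i(l_i(B i)), rho_i(r_i(C i))) on the free product, with
the vacuum state, has the same joint distribution as ((B i, C i)) in (A, phi).
A letter (True, i, a) means a is taken in the left face B i, (False, i, a) in C i.\<close>

definition bi_free ::
  "'b itself \<Rightarrow> (complex \<Rightarrow> 'a::ring_1) \<Rightarrow> ('a \<Rightarrow> complex) \<Rightarrow> 'i set \<Rightarrow> ('i \<Rightarrow> 'a set) \<Rightarrow> ('i \<Rightarrow> 'a set) \<Rightarrow> bool" where
  "bi_free (TB :: 'b itself) sc \<phi> I B C \<longleftrightarrow>
     (\<exists>(S :: 'i \<Rightarrow> 'b set) s l r.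
        (\<forall>i\<in>I. s i \<in> S i \<and> unital_hom (S i) sc (B i) (l i) \<and> unital_hom (S i) sc (C i) (r i)) \<and>
        (\<forall>ws :: (bool \<times> 'i \<times> 'a) list.
           (\<forall>(lf, i, a)\<in>set ws. i \<in> I \<and> a \<in> (if lf then B i else C i)) \<longrightarrow>
           \<phi> (prod_list (map (\<lambda>(lf, i, a). a) ws)) =
           foldr (\<lambda>(lf, i, a) x. if lf then lam s i (l i a) x else rho s i (r i a) x) ws (ev []) []))"

definition T2 :: "(complex \<times> complex) set" where
  "T2 = {(z, w). cmod z = 1 \<and> cmod w = 1}"

definition PT2 :: "(complex \<times> complex) measure \<Rightarrow> bool" where
  "PT2 \<nu> \<longleftrightarrow> prob_space \<nu> \<and> sets \<nu> = sets (restrict_space borel T2)"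

definition mom :: "int \<Rightarrow> int \<Rightarrow> (complex \<times> complex) measure \<Rightarrow> complex" where
  "mom p q \<nu> = (\<integral>z. (fst z) powi p * (snd z) powi q \<partial>\<nu>)"

definition distribution_of ::
  "('a::ring_1 \<Rightarrow> 'a) \<Rightarrow> ('a \<Rightarrow> complex) \<Rightarrow> 'a \<Rightarrow> 'a \<Rightarrow> (complex \<times> complex) measure \<Rightarrow> bool" where
  "distribution_of adj \<phi> u v \<nu> \<longleftrightarrow>
     PT2 \<nu> \<and> (\<forall>p q. mom p q \<nu> = \<phi> (upow adj u p * upow adj v q))"

definition star_meas :: "(complex \<times> complex) measure \<Rightarrow> (complex \<times> complex) measure" where
  "star_meas \<nu> = distr \<nu> \<nu> (\<lambda>(z, w). (z, inverse w))"

text \<open>bfmc_realizes TA TB nu1 nu2 nu: nu is the distribution of (u1 u2, v1 v2) for some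
bi-free bipartite pairs (u1, v1), (u2, v2) of commuting unitaries in a *-probability space
(on the type 'a, with free-product realization having bases in the type 'b) whose
distributions are nu1 and nu2; i.e. nu = nu1 boxtimes-boxtimes nu2.\<close>

definition bfmc_realizes ::
  "'a::ring_1 itself \<Rightarrow> 'b itself \<Rightarrow> (complex \<times> complex) measure \<Rightarrow> (complex \<times> complex) measure
     \<Rightarrow> (complex \<times> complex) measure \<Rightarrow> bool" where
  "bfmc_realizes TA TB \<nu>1 \<nu>2 \<nu> \<longleftrightarrow>
     (\<exists>(sc :: complex \<Rightarrow> 'a) adj \<phi> u1 v1 u2 v2.
        star_prob_space sc adj \<phi> \<and>
        unitary_el adj u1 \<and> unitary_el adj v1 \<and> unitary_el adj u2 \<and> unitary_el adj v2 \<and>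
        (\<forall>x\<in>{u1, u2}. \<forall>y\<in>{v1, v2}. x * y = y * x) \<and>
        distribution_of adj \<phi> u1 v1 \<nu>1 \<and> distribution_of adj \<phi> u2 v2 \<nu>2 \<and>
        bi_free TB sc \<phi> {1::nat, 2}
          (\<lambda>i. star_alg sc adj {if i = 1 then u1 else u2})
          (\<lambda>i. star_alg sc adj {if i = 1 then v1 else v2}) \<and>
        distribution_of adj \<phi> (u1 * u2) (v1 * v2) \<nu>)"

end

theory Submission
  imports Defs
begin

text \<open>In the free product realisation of a bi-free family with vacuum \<open>\<Omega> = ev []\<close>, the right
action \<open>\<rho>\<^sub>i(B)\<close> on a vector supported on words not ending in colour \<open>i\<close> keeps each word or
appends one letter of colour \<open>i\<close> to it, with the coefficients of \<open>\<rho>\<^sub>i(B)\<Omega>\<close>; and the coefficient of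
\<open>\<lambda>\<^sub>i(A)x\<close> at a word not starting with colour \<open>i\<close> only reads the coefficients of \<open>x\<close> at that
word and at its extensions by one letter of colour \<open>i\<close> on the left. Hence, for \<open>i \<noteq> j\<close>, the
vector \<open>\<lambda>\<^sub>j(C)\<rho>\<^sub>i(B)\<rho>\<^sub>j(D)\<Omega>\<close> agrees with \<open>\<langle>\<lambda>\<^sub>j(C)\<rho>\<^sub>j(D)\<Omega>, \<Omega>\<rangle> \<rho>\<^sub>i(B)\<Omega>\<close> on the words
\<open>[]\<close> and \<open>[(i, t)]\<close>, which is all that the vacuum coefficient of \<open>\<lambda>\<^sub>i(A)\<close> sees. This gives
\<open>\<phi>(u\<^sub>1u\<^sub>2v\<^sub>1v\<^sub>2) = \<phi>(u\<^sub>1v\<^sub>1)\<phi>(u\<^sub>2v\<^sub>2)\<close> without using unitarity or commutation. The second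
identity is the first one for \<open>\<nu>\<^sub>1\<^sup>\<star>, \<nu>\<^sub>2\<^sup>\<star>\<close>, because \<open>m\<^sub>p\<^sub>,\<^sub>q(\<nu>\<^sup>\<star>) = m\<^sub>p\<^sub>,\<^sub>-\<^sub>q(\<nu>)\<close>.\<close>

lemma expand_comp_inj_apply:
  assumes "inj f"
  shows "expand y (\<lambda>t. f (j t)) (f u) = expand y j u"
  unfolding expand_def by (simp add: inj_eq[OF assms])

lemma expand_outside_range: "u \<notin> range j \<Longrightarrow> expand y j u = 0"
  unfolding expand_def by (intro sum.neutral) auto

lemma expand_nonzero_imp_range: "expand y j u \<noteq> 0 \<Longrightarrow> u \<in> j ` {t. y t \<noteq> 0}"
proof -
  assume "expand y j u \<noteq> 0"
  then obtain t where "t \<in> {t. y t \<noteq> 0}" "(if u = j t then y t else 0) \<noteq> 0"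
    unfolding expand_def by (rule sum.not_neutral_contains_not_neutral)
  then show ?thesis by (auto split: if_splits)
qed

lemma finite_expand_support: "finite {u. expand y j u \<noteq> 0}"
proof (cases "finite {t. y t \<noteq> 0}")
  case True
  have "{u. expand y j u \<noteq> 0} \<subseteq> j ` {t. y t \<noteq> 0}"
    using expand_nonzero_imp_range by blast
  then show ?thesis using True by (rule finite_subset[OF _ finite_imageI])
qed (simp add: expand_def)

lemma finite_support_lin_comb:
  fixes x :: "'w \<Rightarrow> complex" and L :: "'w \<Rightarrow> 'u \<Rightarrow> complex"
  assumes "\<And>w. finite {u. L w u \<noteq> 0}"
  shows "finite {u. (\<Sum>w\<in>{w. x w \<noteq> 0}. x w * L w u) \<noteq> 0}"
proof (cases "finite {w. x w \<noteq> 0}")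
  case True
  have "{u. (\<Sum>w\<in>{w. x w \<noteq> 0}. x w * L w u) \<noteq> 0} \<subseteq> (\<Union>w\<in>{w. x w \<noteq> 0}. {u. L w u \<noteq> 0})"
  proof
    fix u assume "u \<in> {u. (\<Sum>w\<in>{w. x w \<noteq> 0}. x w * L w u) \<noteq> 0}"
    then obtain w where "w \<in> {w. x w \<noteq> 0}" "x w * L w u \<noteq> 0"
      by (auto intro: sum.not_neutral_contains_not_neutral)
    then show "u \<in> (\<Union>w\<in>{w. x w \<noteq> 0}. {u. L w u \<noteq> 0})" by auto
  qed
  then show ?thesis by (rule finite_subset) (use True assms in blast)
qed simp

lemma finite_lam_support: "finite {u. lam s i T x u \<noteq> 0}"
proof -
  have "finite {u. lam_e s i T w u \<noteq> 0}" for w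
    unfolding lam_e_def by (cases w) (auto simp: finite_expand_support split: prod.split)
  then show ?thesis unfolding lam_def by (rule finite_support_lin_comb)
qed

lemma finite_rho_support: "finite {u. rho s i T x u \<noteq> 0}"
proof -
  have "finite {u. rho_e s i T w u \<noteq> 0}" for w
    unfolding rho_e_def by (auto simp: finite_expand_support)
  then show ?thesis unfolding rho_def by (rule finite_support_lin_comb)
qed

lemma rho_ev: "rho s i T (ev w) = rho_e s i T w"
  unfolding rho_def ev_def by (simp add: Collect_conv_if)

definition basis_word :: "('i \<Rightarrow> 'b) \<Rightarrow> 'i \<Rightarrow> 'b \<Rightarrow> ('i \<times> 'b) list" where
  "basis_word s i t = (if t = s i then [] else [(i, t)])"

definition not_ending_in :: "'i \<Rightarrow> ('i \<times> 'b) list \<Rightarrow> bool" where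
  "not_ending_in i w \<longleftrightarrow> w = [] \<or> fst (last w) \<noteq> i"

lemma rho_e_not_ending_in:
  assumes "not_ending_in i w"
  shows "rho_e s i T w = expand (T (ev (s i))) (\<lambda>t. w @ basis_word s i t)"
proof -
  have "(\<lambda>t. w @ basis_word s i t) = (\<lambda>t. if t = s i then w else w @ [(i, t)])"
    by (auto simp: basis_word_def)
  then show ?thesis using assms by (auto simp: rho_e_def not_ending_in_def)
qed

lemma rho_e_append:
  assumes w: "not_ending_in i w" and v: "not_ending_in i v" and u: "u = [] \<or> (\<exists>t. u = [(i, t)])"
  shows "rho_e s i T w (v @ u) = (if w = v then rho_e s i T [] u else 0)"
proof (cases "w = v")
  case True
  have "rho_e s i T w (w @ u) = expand (T (ev (s i))) (basis_word s i) u"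
    unfolding rho_e_not_ending_in[OF w] by (rule expand_comp_inj_apply) (simp add: inj_def)
  moreover have "rho_e s i T [] = expand (T (ev (s i))) (basis_word s i)"
    using rho_e_not_ending_in[of i "[]"] by (simp add: not_ending_in_def)
  ultimately show ?thesis using True by simp
next
  case False
  have "v @ u \<notin> range (\<lambda>t. w @ basis_word s i t)"
    using False w v u by (auto simp: basis_word_def not_ending_in_def split: if_splits)
  then show ?thesis using False by (simp add: rho_e_not_ending_in[OF w] expand_outside_range)
qed

lemma rho_append:
  assumes fin: "finite {w. y w \<noteq> 0}" and supp: "\<And>w. y w \<noteq> 0 \<Longrightarrow> not_ending_in i w"
    and v: "not_ending_in i v" and u: "u = [] \<or> (\<exists>t. u = [(i, t)])"
  shows "rho s i T y (v @ u) = y v * rho s i T (ev []) u"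
proof -
  have "rho s i T y (v @ u) = (\<Sum>w\<in>{w. y w \<noteq> 0}. if w = v then y v * rho_e s i T [] u else 0)"
    unfolding rho_def using supp v u by (intro sum.cong) (auto simp: rho_e_append)
  also have "\<dots> = y v * rho_e s i T [] u" using fin by simp
  finally show ?thesis by (simp add: rho_ev)
qed

lemma rho_vacuum_not_ending_in:
  assumes "i \<noteq> j" and "rho s j T (ev []) w \<noteq> 0"
  shows "not_ending_in i w"
proof -
  have "w \<in> range (basis_word s j)"
    using expand_nonzero_imp_range assms(2) by (fastforce simp: rho_ev rho_e_not_ending_in not_ending_in_def)
  then show ?thesis using assms(1) by (auto simp: basis_word_def not_ending_in_def)
qed

definition not_starting_with :: "'i \<Rightarrow> ('i \<times> 'b) list \<Rightarrow> bool" where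
  "not_starting_with i w \<longleftrightarrow> w = [] \<or> fst (hd w) \<noteq> i"

lemma lam_e_not_starting_with:
  assumes "not_starting_with i w"
  shows "lam_e s i T w = expand (T (ev (s i))) (\<lambda>t. basis_word s i t @ w)"
proof -
  have "(\<lambda>t. basis_word s i t @ w) = (\<lambda>t. if t = s i then w else (i, t) # w)"
    by (auto simp: basis_word_def)
  then show ?thesis using assms by (auto simp: lam_e_def not_starting_with_def split: list.split)
qed

lemma lam_e_Cons_same:
  "lam_e s i T ((i, t) # w) = expand (T (ev t)) (\<lambda>t'. basis_word s i t' @ w)"
proof -
  have "(\<lambda>t'. basis_word s i t' @ w) = (\<lambda>t'. if t' = s i then w else (i, t') # w)"
    by (auto simp: basis_word_def)
  then show ?thesis by (simp add: lam_e_def)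
qed

lemma lam_e_reduced:
  assumes v: "not_starting_with i v"
  shows "lam_e s i T w v =
    (if w = v then lam_e s i T [] [] else if w = (i, snd (hd w)) # v then lam_e s i T [hd w] [] else 0)"
proof -
  have app_inj: "inj (\<lambda>x. x @ u)" for u :: "('i \<times> 'b) list" by (simp add: inj_def)
  have nil: "lam_e s i T [] = expand (T (ev (s i))) (basis_word s i)"
    using lam_e_not_starting_with[of i "[]"] by (simp add: not_starting_with_def)
  have one: "lam_e s i T [(i, t)] = expand (T (ev t)) (basis_word s i)" for t
    using lam_e_Cons_same[of s i T t "[]"] by simp
  consider "w = v" | t where "w = (i, t) # v" | "w \<noteq> v" "\<forall>t. w \<noteq> (i, t) # v" by auto
  then show ?thesis
  proof cases
    case 1
    then show ?thesis
      using expand_comp_inj_apply[OF app_inj[of v], of "T (ev (s i))" "basis_word s i" "[]"]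
      by (simp add: lam_e_not_starting_with[OF v] nil)
  next
    case (2 t)
    then show ?thesis
      using expand_comp_inj_apply[OF app_inj[of v], of "T (ev t)" "basis_word s i" "[]"]
      by (simp add: lam_e_Cons_same one)
  next
    case 3
    show ?thesis
    proof (cases "not_starting_with i w")
      case True
      have "v \<notin> range (\<lambda>t. basis_word s i t @ w)"
        using 3 v by (auto simp: basis_word_def not_starting_with_def split: if_splits)
      then show ?thesis using 3 by (simp add: lam_e_not_starting_with[OF True] expand_outside_range)
    next
      case False
      then obtain t w' where w: "w = (i, t) # w'" by (cases w) (auto simp: not_starting_with_def)
      have "v \<notin> range (\<lambda>t'. basis_word s i t' @ w')"
        using 3 v w by (auto simp: basis_word_def not_starting_with_def split: if_splits)
      then show ?thesis using 3 w by (simp add: lam_e_Cons_same expand_outside_range)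
    qed
  qed
qed

lemma lam_reduced:
  assumes fin: "finite {w. y w \<noteq> 0}" and v: "not_starting_with i v"
    and F: "finite F" and van: "\<And>t. t \<notin> F \<Longrightarrow> y ((i, t) # v) = 0"
  shows "lam s i T y v = y v * lam_e s i T [] [] + (\<Sum>t\<in>F. y ((i, t) # v) * lam_e s i T [(i, t)] [])"
proof -
  let ?S = "{w. y w \<noteq> 0}"
  have "lam s i T y v = (\<Sum>w\<in>?S. y w * lam_e s i T w v)" by (simp add: lam_def)
  also have "\<dots> = (\<Sum>w\<in>?S. (if w = v then y v * lam_e s i T [] [] else 0) +
      (\<Sum>t\<in>F. if w = (i, t) # v then y ((i, t) # v) * lam_e s i T [(i, t)] [] else 0))"
  proof (rule sum.cong[OF refl])
    fix w assume w: "w \<in> ?S"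
    consider "w = v" | t where "w = (i, t) # v" | "w \<noteq> v" "\<forall>t. w \<noteq> (i, t) # v" by auto
    then show "y w * lam_e s i T w v = (if w = v then y v * lam_e s i T [] [] else 0) +
      (\<Sum>t\<in>F. if w = (i, t) # v then y ((i, t) # v) * lam_e s i T [(i, t)] [] else 0)"
    proof cases
      case (2 t)
      then have "t \<in> F" using w van by auto
      then show ?thesis using 2 F by (simp add: lam_e_reduced[OF v])
    qed (auto simp: lam_e_reduced[OF v])
  qed
  also have "\<dots> = (\<Sum>w\<in>?S. if w = v then y v * lam_e s i T [] [] else 0) +
      (\<Sum>t\<in>F. \<Sum>w\<in>?S. if w = (i, t) # v then y ((i, t) # v) * lam_e s i T [(i, t)] [] else 0)"
    by (simp only: sum.distrib sum.swap[of _ ?S F])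
  also have "\<dots> = y v * lam_e s i T [] [] + (\<Sum>t\<in>F. y ((i, t) # v) * lam_e s i T [(i, t)] [])"
  proof -
    have "(if y w \<noteq> 0 then y w * c else 0) = y w * c" for w and c :: complex by simp
    then show ?thesis using fin by simp
  qed
  finally show ?thesis .
qed

lemma lam_nil_scaled:
  assumes "finite {w. x w \<noteq> 0}" "finite {w. x' w \<noteq> 0}"
    and "x [] = c * x' []" and "\<And>t. x [(i, t)] = c * x' [(i, t)]"
  shows "lam s i T x [] = c * lam s i T x' []"
proof -
  let ?F = "{t. x' [(i, t)] \<noteq> 0}"
  have F: "finite ?F"
    using finite_vimageI[OF assms(2), of "\<lambda>t. [(i, t)]"] by (simp add: inj_def vimage_def)
  show ?thesis using lam_reduced[OF assms(1) _ F] lam_reduced[OF assms(2) _ F] assms(3,4)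
    by (simp add: not_starting_with_def sum_distrib_left algebra_simps)
qed

lemma lam_rho_factor:
  assumes ij: "i \<noteq> j" and fin: "finite {w. z w \<noteq> 0}"
    and supp: "\<And>w. z w \<noteq> 0 \<Longrightarrow> not_ending_in i w" and u: "u = [] \<or> (\<exists>t. u = [(i, t)])"
  shows "lam s j C (rho s i B z) u = rho s i B (ev []) u * lam s j C z []"
proof -
  let ?y = "rho s i B z" and ?F = "{t. z [(j, t)] \<noteq> 0}"
  have F: "finite ?F"
    using finite_vimageI[OF fin, of "\<lambda>t. [(j, t)]"] by (simp add: inj_def vimage_def)
  have y_u: "?y u = z [] * rho s i B (ev []) u"
    using rho_append[OF fin supp, of "[]" u] u by (simp add: not_ending_in_def)
  have y_ju: "?y ((j, t) # u) = z [(j, t)] * rho s i B (ev []) u" for t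
    using rho_append[OF fin supp, of "[(j, t)]" u] u ij by (simp add: not_ending_in_def)
  have "lam s j C ?y u = ?y u * lam_e s j C [] [] + (\<Sum>t\<in>?F. ?y ((j, t) # u) * lam_e s j C [(j, t)] [])"
    by (rule lam_reduced[OF finite_rho_support _ F]) (use u ij y_ju in \<open>auto simp: not_starting_with_def\<close>)
  also have "\<dots> = rho s i B (ev []) u *
      (z [] * lam_e s j C [] [] + (\<Sum>t\<in>?F. z [(j, t)] * lam_e s j C [(j, t)] []))"
    by (simp add: y_u y_ju sum_distrib_left algebra_simps)
  also have "z [] * lam_e s j C [] [] + (\<Sum>t\<in>?F. z [(j, t)] * lam_e s j C [(j, t)] []) = lam s j C z []"
    by (rule lam_reduced[OF fin _ F, symmetric]) (auto simp: not_starting_with_def)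
  finally show ?thesis .
qed

lemma lam_lam_rho_rho_vacuum:
  assumes "i \<noteq> j"
  shows "lam s i A (lam s j C (rho s i B (rho s j D (ev [])))) [] =
         lam s i A (rho s i B (ev [])) [] * lam s j C (rho s j D (ev [])) []"
proof -
  let ?z = "rho s j D (ev [])"
  have "lam s j C (rho s i B ?z) u = lam s j C ?z [] * rho s i B (ev []) u"
    if "u = [] \<or> (\<exists>t. u = [(i, t)])" for u
    using lam_rho_factor[OF assms finite_rho_support rho_vacuum_not_ending_in[OF assms] that]
    by (simp add: mult.commute)
  then have "lam s i A (lam s j C (rho s i B ?z)) [] = lam s j C ?z [] * lam s i A (rho s i B (ev [])) []"
    by (intro lam_nil_scaled[OF finite_lam_support finite_rho_support]) auto
  then show ?thesis by (simp add: mult.commute)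
qed

lemma bi_free_moment_factor:
  fixes TB :: "'b itself"
  assumes bf: "bi_free TB sc \<phi> I B C" and ij: "i \<in> I" "j \<in> I" "i \<noteq> j"
    and mem: "a \<in> B i" "a' \<in> B j" "b \<in> C i" "b' \<in> C j"
  shows "\<phi> (a * a' * b * b') = \<phi> (a * b) * \<phi> (a' * b')"
proof -
  from bf obtain s :: "_ \<Rightarrow> 'b" and l r where realize:
    "\<And>ws. (\<forall>(lf, i, a)\<in>set ws. i \<in> I \<and> a \<in> (if lf then B i else C i)) \<Longrightarrow>
       \<phi> (prod_list (map (\<lambda>(lf, i, a). a) ws)) =
       foldr (\<lambda>(lf, i, a) x. if lf then lam s i (l i a) x else rho s i (r i a) x) ws (ev []) []"
    unfolding bi_free_def by blast
  have "\<phi> (a * a' * b * b') =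
      lam s i (l i a) (lam s j (l j a') (rho s i (r i b) (rho s j (r j b') (ev [])))) []"
    using realize[of "[(True, i, a), (True, j, a'), (False, i, b), (False, j, b')]"] ij mem
    by (simp add: mult.assoc)
  also have "\<dots> = lam s i (l i a) (rho s i (r i b) (ev [])) [] * lam s j (l j a') (rho s j (r j b') (ev [])) []"
    using ij(3) by (rule lam_lam_rho_rho_vacuum)
  also have "\<dots> = \<phi> (a * b) * \<phi> (a' * b')"
    using realize[of "[(True, i, a), (False, i, b)]"] realize[of "[(True, j, a'), (False, j, b')]"] ij mem
    by simp
  finally show ?thesis .
qed

lemma mom_1_1_bfmc:
  assumes "bfmc_realizes TA TB \<nu>1 \<nu>2 \<nu>"
  shows "mom 1 1 \<nu> = mom 1 1 \<nu>1 * mom 1 1 \<nu>2"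
proof -
  obtain sc :: "complex \<Rightarrow> 'a" and adj \<phi> u1 v1 u2 v2 where
    d1: "distribution_of adj \<phi> u1 v1 \<nu>1" and d2: "distribution_of adj \<phi> u2 v2 \<nu>2" and
    bf: "bi_free TB sc \<phi> {1::nat, 2}
          (\<lambda>i. star_alg sc adj {if i = 1 then u1 else u2})
          (\<lambda>i. star_alg sc adj {if i = 1 then v1 else v2})" and
    d: "distribution_of adj \<phi> (u1 * u2) (v1 * v2) \<nu>"
    using assms unfolding bfmc_realizes_def by blast
  have "\<phi> (u1 * u2 * v1 * v2) = \<phi> (u1 * v1) * \<phi> (u2 * v2)"
    by (rule bi_free_moment_factor[OF bf, of 1 2]) (auto intro: star_alg.gen)
  then show ?thesis
    using d d1 d2 by (simp add: distribution_of_def upow_def mult.assoc)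
qed

lemma mom_star_meas:
  assumes "PT2 \<nu>"
  shows "mom p q (star_meas \<nu>) = mom p (- q) \<nu>"
proof -
  have sets: "sets \<nu> = sets (restrict_space borel T2)"
    using assms by (simp add: PT2_def)
  have "(\<lambda>(z, w). (z, inverse w)) \<in> restrict_space borel T2 \<rightarrow>\<^sub>M restrict_space borel T2"
  proof (rule measurable_restrict_space3)
    show "(\<lambda>(z, w). (z, inverse w)) \<in> borel \<rightarrow>\<^sub>M (borel :: (complex \<times> complex) measure)"
      unfolding borel_prod[symmetric] by measurable
    show "(\<lambda>(z, w). (z, inverse w)) \<in> T2 \<rightarrow> T2"
      by (auto simp: T2_def norm_inverse)
  qed
  then have inv: "(\<lambda>(z, w). (z, inverse w)) \<in> \<nu> \<rightarrow>\<^sub>M \<nu>"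
    by (simp add: measurable_cong_sets[OF sets sets])
  have "(\<lambda>z. fst z powi p * snd z powi q) \<in> borel \<rightarrow>\<^sub>M (borel :: complex measure)"
    unfolding borel_prod[symmetric] power_int_def by measurable
  then have integrand: "(\<lambda>z. fst z powi p * snd z powi q) \<in> borel_measurable \<nu>"
    by (subst measurable_cong_sets[OF sets refl]) (rule measurable_restrict_space1)
  show ?thesis
    unfolding mom_def star_meas_def
    by (subst integral_distr[OF inv integrand]) (simp add: case_prod_beta power_int_inverse power_int_minus)
qed

theorem lemma3p2:
  fixes \<nu>1 \<nu>2 \<nu> \<mu> :: "(complex \<times> complex) measure"
  assumes "PT2 \<nu>1" and "PT2 \<nu>2"
  shows "(bfmc_realizes TYPE('a::ring_1) TYPE('b) \<nu>1 \<nu>2 \<nu> \<longrightarrow>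
            mom 1 1 \<nu> = mom 1 1 \<nu>1 * mom 1 1 \<nu>2) \<and>
         (bfmc_realizes TYPE('c::ring_1) TYPE('d) (star_meas \<nu>1) (star_meas \<nu>2) \<mu> \<longrightarrow>
            mom 1 (-1) (star_meas \<mu>) = mom 1 (-1) \<nu>1 * mom 1 (-1) \<nu>2)"
proof (intro conjI impI)
  assume "bfmc_realizes TYPE('a) TYPE('b) \<nu>1 \<nu>2 \<nu>"
  then show "mom 1 1 \<nu> = mom 1 1 \<nu>1 * mom 1 1 \<nu>2" by (rule mom_1_1_bfmc)
next
  assume R: "bfmc_realizes TYPE('c) TYPE('d) (star_meas \<nu>1) (star_meas \<nu>2) \<mu>"
  then have "PT2 \<mu>" unfolding bfmc_realizes_def distribution_of_def by blast
  then have "mom 1 (-1) (star_meas \<mu>) = mom 1 1 \<mu>" by (simp add: mom_star_meas)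
  also have "\<dots> = mom 1 1 (star_meas \<nu>1) * mom 1 1 (star_meas \<nu>2)"
    using R by (rule mom_1_1_bfmc)
  also have "\<dots> = mom 1 (-1) \<nu>1 * mom 1 (-1) \<nu>2"
    using assms by (simp add: mom_star_meas)
  finally show "mom 1 (-1) (star_meas \<mu>) = mom 1 (-1) \<nu>1 * mom 1 (-1) \<nu>2" .
qed

end
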